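(* Let $U$ be an open subset of $\mathbb{H}\cong\mathbb{C}^2$. The set $\mathcal{H}_{\mathbb{R}}$ of almost everywhere defined hyperholomorphic functions $f=f_1+f_2\mathbf{j}$ on $U$ whose components $f_1,f_2$ are real valued is a right algebra over $\mathbb{R}$ (with respect to pointwise addition and pointwise quaternionic multiplication).
   Context: Quaternions are written $q=z_1+z_2\mathbf{j}$ with $z_1,z_2\in\mathbb{C}$, where $\mathbf{j}^2=-1$ and $z\mathbf{j}=\mathbf{j}\overline z$ for $z\in\mathbb{C}$. A smooth function $f:U\to\mathbb{H}$ is written $f=f_1+f_2\mathbf{j}$ with $f_1,f_2$ complex valued (its components). The product of $f=f_1+f_2\mathbf{j}$ and $g=g_1+g_2\mathbf{j}$ is $f*g=f_1g_1-f_2\overline g_2+(f_1g_2+f_2\overline g_1)\mathbf{j}$. The modified Cauchy–Fueter operator is $\mathcal{D}f=\frac12\big(\frac{\partial f_1}{\partial\overline z_1}-\frac{\partial\overline f_2}{\partial z_2}\big)+\mathbf{j}\,\frac12\big(\frac{\partial f_1}{\partial\overline z_2}+\frac{\partial\overline f_2}{\partial z_1}\big)$, and $f$ is hyperholomorphic if $\mathcal{D}f=0$ where defined. An almost everywhere defined hyperholomorphic function is one defined and smooth on an open subset of $U$ of full measure, where it satisfies $\mathcal{D}f=0$. *)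

theory Defs
  imports "HOL-Analysis.Analysis"
begin

text \<open>Quaternions q = z1 + z2 j are represented by the pair (z1, z2) of complex numbers;
  H is identified with C^2 = complex \<times> complex (a Euclidean space, carrying Lebesgue measure).\<close>

type_synonym quat = "complex \<times> complex"

definition qmult :: "quat \<Rightarrow> quat \<Rightarrow> quat" where
  "qmult f g = (fst f * fst g - snd f * cnj (snd g), fst f * snd g + snd f * cnj (fst g))"

text \<open>Smoothness (C-infinity) on an open set: continuous, differentiable, and every
  directional derivative is again smooth (coinductively, i.e. derivatives of all orders).\<close>

coinductive smooth_on :: "'a::real_normed_vector set \<Rightarrow> ('a \<Rightarrow> 'b::real_normed_vector) \<Rightarrow> bool" where
  "\<lbrakk> open S; continuous_on S f; \<forall>x\<in>S. f differentiable (at x);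
     \<forall>v. smooth_on S (\<lambda>x. frechet_derivative f (at x) v) \<rbrakk> \<Longrightarrow> smooth_on S f"

text \<open>Real partial derivatives w.r.t. x1, y1, x2, y2 where z1 = x1 + i y1, z2 = x2 + i y2,
  and the Wirtinger derivatives.\<close>

definition dz1 :: "(complex \<times> complex \<Rightarrow> complex) \<Rightarrow> complex \<times> complex \<Rightarrow> complex" where
  "dz1 h p = (frechet_derivative h (at p) (1, 0) - \<i> * frechet_derivative h (at p) (\<i>, 0)) / 2"

definition dzbar1 :: "(complex \<times> complex \<Rightarrow> complex) \<Rightarrow> complex \<times> complex \<Rightarrow> complex" where
  "dzbar1 h p = (frechet_derivative h (at p) (1, 0) + \<i> * frechet_derivative h (at p) (\<i>, 0)) / 2"

definition dz2 :: "(complex \<times> complex \<Rightarrow> complex) \<Rightarrow> complex \<times> complex \<Rightarrow> complex" where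
  "dz2 h p = (frechet_derivative h (at p) (0, 1) - \<i> * frechet_derivative h (at p) (0, \<i>)) / 2"

definition dzbar2 :: "(complex \<times> complex \<Rightarrow> complex) \<Rightarrow> complex \<times> complex \<Rightarrow> complex" where
  "dzbar2 h p = (frechet_derivative h (at p) (0, 1) + \<i> * frechet_derivative h (at p) (0, \<i>)) / 2"

definition CF :: "(complex \<times> complex \<Rightarrow> quat) \<Rightarrow> complex \<times> complex \<Rightarrow> quat" where
  "CF f p =
     ((dzbar1 (\<lambda>q. fst (f q)) p - dz2 (\<lambda>q. cnj (snd (f q))) p) / 2,
      (dzbar2 (\<lambda>q. fst (f q)) p + dz1 (\<lambda>q. cnj (snd (f q))) p) / 2)"

definition ae_hyperholomorphic :: "(complex \<times> complex) set \<Rightarrow> (complex \<times> complex) set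
    \<Rightarrow> (complex \<times> complex \<Rightarrow> quat) \<Rightarrow> bool" where
  "ae_hyperholomorphic U V f \<longleftrightarrow>
     open V \<and> V \<subseteq> U \<and> negligible (U - V) \<and> smooth_on V f \<and> (\<forall>p\<in>V. CF f p = (0, 0))"

definition H_R :: "(complex \<times> complex) set \<Rightarrow> ((complex \<times> complex) set \<times> (complex \<times> complex \<Rightarrow> quat)) set" where
  "H_R U = {(V, f). ae_hyperholomorphic U V f \<and>
                    (\<forall>p\<in>V. fst (f p) \<in> \<real> \<and> snd (f p) \<in> \<real>)}"

end

theory Submission
  imports Defs
begin

text \<open>If both components of f = f1 + f2 j are real, put F = f1 + i f2. Then the
  quaternionic product of two such functions is the complex product F G, and
  the Cauchy--Fueter equations say F_{x2} = i F_{x1} and F_{y2} = - i F_{y1}.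
  These two equations are first-order, linear and have complex coefficients, so
  they survive the Leibniz rule: (F G)_{x2} = F_{x2} G + F G_{x2} = i (F G)_{x1},
  and likewise for y. Smoothness of sums and products is the usual closure of
  C-infinity under bounded bilinear maps, and the domains only shrink by
  intersection, which loses a null set.\<close>

lemma smooth_onD:
  assumes "smooth_on S f"
  shows "open S" "continuous_on S f" "\<And>x. x \<in> S \<Longrightarrow> f differentiable (at x)"
    "\<And>v. smooth_on S (\<lambda>x. frechet_derivative f (at x) v)"
  using assms by (auto elim: smooth_on.cases)

lemma smooth_on_has_derivative:
  assumes "smooth_on S f" "x \<in> S"
  shows "(f has_derivative frechet_derivative f (at x)) (at x)"
  using smooth_onD[OF assms(1)] assms(2) by (simp add: frechet_derivative_works)

lemma smooth_on_const:
  assumes "open S"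
  shows "smooth_on S (\<lambda>_. c)"
proof (coinduction arbitrary: c rule: smooth_on.coinduct)
  case smooth_on
  then show ?case using assms by auto
qed

lemma smooth_on_subset:
  assumes "smooth_on S f" "open T" "T \<subseteq> S"
  shows "smooth_on T f"
  using assms(1,3)
proof (coinduction arbitrary: S f rule: smooth_on.coinduct)
  case (smooth_on S f)
  with assms(2) show ?case
    using smooth_onD[OF smooth_on(1)] continuous_on_subset[OF smooth_onD(2)[OF smooth_on(1)]]
    by blast
qed

text \<open>Finite sums of B-products of smooth functions, up to agreement on S. This class
  is closed under taking directional derivatives, which is what the coinduction
  for smoothness needs.\<close>

inductive sums_of_products_on
  for S :: "'a::real_normed_vector set" and B :: "'b::real_normed_vector \<Rightarrow> 'c::real_normed_vector \<Rightarrow> 'd::real_normed_vector"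
  where
    smooth: "smooth_on S h \<Longrightarrow> sums_of_products_on S B h"
  | add: "sums_of_products_on S B h \<Longrightarrow> sums_of_products_on S B k \<Longrightarrow> sums_of_products_on S B (\<lambda>x. h x + k x)"
  | product: "smooth_on S f \<Longrightarrow> smooth_on S g \<Longrightarrow> sums_of_products_on S B (\<lambda>x. B (f x) (g x))"
  | cong: "sums_of_products_on S B h \<Longrightarrow> (\<And>x. x \<in> S \<Longrightarrow> k x = h x) \<Longrightarrow> sums_of_products_on S B k"

lemma sums_of_products_on_frechet_derivative:
  assumes "\<And>x. x \<in> S \<Longrightarrow> (h has_derivative D x) (at x)"
    and "sums_of_products_on S B (\<lambda>x. D x v)"
  shows "sums_of_products_on S B (\<lambda>x. frechet_derivative h (at x) v)"
  using assms(2) by (rule sums_of_products_on.cong) (simp add: frechet_derivative_at[OF assms(1)])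

lemma sums_of_products_onD:
  assumes "bounded_bilinear B" "sums_of_products_on S B h"
  shows "open S \<and> continuous_on S h \<and> (\<forall>x\<in>S. h differentiable (at x))
    \<and> (\<forall>v. sums_of_products_on S B (\<lambda>x. frechet_derivative h (at x) v))"
  using assms(2)
proof induction
  case (smooth h)
  then show ?case by (simp add: smooth_onD sums_of_products_on.smooth)
next
  case (add h k)
  then have "open S" and "continuous_on S h" "continuous_on S k"
    and "\<forall>x\<in>S. h differentiable (at x)" "\<forall>x\<in>S. k differentiable (at x)"
    and Dh: "\<And>v. sums_of_products_on S B (\<lambda>x. frechet_derivative h (at x) v)"
    and Dk: "\<And>v. sums_of_products_on S B (\<lambda>x. frechet_derivative k (at x) v)"
    by blast+
  then have D: "((\<lambda>x. h x + k x) has_derivative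
      (\<lambda>v. frechet_derivative h (at x) v + frechet_derivative k (at x) v)) (at x)" if "x \<in> S" for x
    using that by (intro has_derivative_add) (simp_all add: frechet_derivative_works)
  have "sums_of_products_on S B (\<lambda>x. frechet_derivative (\<lambda>x. h x + k x) (at x) v)" for v
    by (rule sums_of_products_on_frechet_derivative[OF D sums_of_products_on.add[OF Dh Dk]])
  then show ?case
    using \<open>open S\<close> continuous_on_add[OF \<open>continuous_on S h\<close> \<open>continuous_on S k\<close>] D
    by (auto simp: differentiable_def)
next
  case (product f g)
  note f = smooth_onD[OF product(1)] and g = smooth_onD[OF product(2)]
  have D: "((\<lambda>x. B (f x) (g x)) has_derivative (\<lambda>v. B (f x) (frechet_derivative g (at x) v)
      + B (frechet_derivative f (at x) v) (g x))) (at x)" if "x \<in> S" for x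
    using f(3) g(3) that
    by (intro bounded_bilinear.FDERIV[OF assms(1)]) (auto simp: frechet_derivative_works)
  have "sums_of_products_on S B (\<lambda>x. frechet_derivative (\<lambda>x. B (f x) (g x)) (at x) v)" for v
    using product f(4) g(4)
    by (intro sums_of_products_on_frechet_derivative[OF D] sums_of_products_on.add
        sums_of_products_on.product) auto
  then show ?case
    using f(1) bounded_bilinear.continuous_on[OF assms(1) f(2) g(2)] D
    by (auto simp: differentiable_def)
next
  case (cong h k)
  from cong.IH have "open S" "continuous_on S h" and dh: "\<forall>x\<in>S. h differentiable (at x)"
    and Dh: "\<And>v. sums_of_products_on S B (\<lambda>x. frechet_derivative h (at x) v)"
    by blast+
  have D: "(k has_derivative frechet_derivative h (at x)) (at x)" if "x \<in> S" for x
  proof (rule has_derivative_transform_within_open[OF _ \<open>open S\<close> that])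
    show "(h has_derivative frechet_derivative h (at x)) (at x)"
      using dh that by (simp add: frechet_derivative_works)
  qed (simp add: cong.hyps(2))
  have "continuous_on S k"
    using \<open>continuous_on S h\<close> cong.hyps(2) by (simp cong: continuous_on_cong)
  moreover have "sums_of_products_on S B (\<lambda>x. frechet_derivative k (at x) v)" for v
    by (rule sums_of_products_on_frechet_derivative[OF D Dh])
  ultimately show ?case using \<open>open S\<close> D by (auto simp: differentiable_def)
qed

lemma sums_of_products_on_smooth:
  assumes "bounded_bilinear B" "sums_of_products_on S B h"
  shows "smooth_on S h"
  using assms(2)
proof (coinduction arbitrary: h rule: smooth_on.coinduct)
  case (smooth_on h)
  from sums_of_products_onD[OF assms(1) this] show ?case by simp
qed

lemma smooth_on_bilinear:
  assumes "bounded_bilinear B" "smooth_on S f" "smooth_on S g"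
  shows "smooth_on S (\<lambda>x. B (f x) (g x))"
  by (rule sums_of_products_on_smooth[OF assms(1) sums_of_products_on.product[OF assms(2,3)]])

lemma smooth_on_add:
  assumes "smooth_on S f" "smooth_on S g"
  shows "smooth_on S (\<lambda>x. f x + g x)"
  by (rule sums_of_products_on_smooth[OF bounded_bilinear_scaleR sums_of_products_on.add])
    (use assms in \<open>blast intro: sums_of_products_on.smooth\<close>)+

definition real_quat :: "quat \<Rightarrow> bool" where
  "real_quat q \<longleftrightarrow> fst q \<in> \<real> \<and> snd q \<in> \<real>"

definition complex_of_quat :: "quat \<Rightarrow> complex" where
  "complex_of_quat q = fst q + \<i> * snd q"

lemma real_quat_iff: "real_quat q \<longleftrightarrow> Im (fst q) = 0 \<and> Im (snd q) = 0"
  by (simp add: real_quat_def complex_is_Real_iff)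

lemma real_quat_add: "real_quat a \<Longrightarrow> real_quat b \<Longrightarrow> real_quat (a + b)"
  by (simp add: real_quat_iff)

lemma real_quat_qmult: "real_quat a \<Longrightarrow> real_quat b \<Longrightarrow> real_quat (qmult a b)"
  by (simp add: real_quat_iff qmult_def)

lemma complex_of_quat_qmult:
  "real_quat a \<Longrightarrow> real_quat b \<Longrightarrow> complex_of_quat (qmult a b) = complex_of_quat a * complex_of_quat b"
  by (simp add: real_quat_iff qmult_def complex_of_quat_def complex_eq_iff)

lemma qmult_commute_real: "real_quat a \<Longrightarrow> real_quat b \<Longrightarrow> qmult a b = qmult b a"
  by (simp add: real_quat_iff qmult_def complex_eq_iff prod_eq_iff)

lemma bounded_bilinear_qmult: "bounded_bilinear qmult"
proof
  fix a a' b b' :: quat and r :: real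
  show "qmult (a + a') b = qmult a b + qmult a' b" "qmult a (b + b') = qmult a b + qmult a b'"
    by (simp_all add: qmult_def algebra_simps)
  show "qmult (r *\<^sub>R a) b = r *\<^sub>R qmult a b" "qmult a (r *\<^sub>R b) = r *\<^sub>R qmult a b"
    by (simp_all add: qmult_def scaleR_conv_of_real algebra_simps)
next
  have "norm (qmult a b) \<le> norm a * norm b * 4" for a b :: quat
  proof -
    obtain a1 a2 b1 b2 where ab: "a = (a1, a2)" "b = (b1, b2)" by fastforce
    have "norm (qmult a b) \<le> norm (a1 * b1 - a2 * cnj b2) + norm (a1 * b2 + a2 * cnj b1)"
      using ab by (simp add: qmult_def norm_Pair_le)
    also have "\<dots> \<le> (norm a1 * norm b1 + norm a2 * norm b2) + (norm a1 * norm b2 + norm a2 * norm b1)"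
      by (intro add_mono order_trans[OF norm_triangle_ineq4] order_trans[OF norm_triangle_ineq])
        (simp_all add: norm_mult)
    also have "\<dots> \<le> norm a * norm b * 4"
    proof -
      have "norm a1 \<le> norm a" "norm a2 \<le> norm a" "norm b1 \<le> norm b" "norm b2 \<le> norm b"
        using ab norm_fst_le norm_snd_le by metis+
      then have "norm a1 * norm b1 \<le> norm a * norm b" "norm a2 * norm b2 \<le> norm a * norm b"
        "norm a1 * norm b2 \<le> norm a * norm b" "norm a2 * norm b1 \<le> norm a * norm b"
        by (auto intro!: mult_mono)
      then show ?thesis by linarith
    qed
    finally show ?thesis .
  qed
  then show "\<exists>K. \<forall>a b. norm (qmult a b) \<le> norm a * norm b * K" by blast
qed

text \<open>On an open set, a function with real components has a differential with real
  components: it agrees there with its componentwise conjugate, whose differential is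
  the conjugate differential.\<close>

lemma has_derivative_real_quat:
  assumes "open S" "x \<in> S" "(f has_derivative f') (at x)" "\<And>y. y \<in> S \<Longrightarrow> real_quat (f y)"
  shows "real_quat (f' v)"
proof -
  let ?conj = "\<lambda>q::quat. (cnj (fst q), cnj (snd q))"
  have "((\<lambda>y. ?conj (f y)) has_derivative (\<lambda>v. ?conj (f' v))) (at x)"
    by (auto intro!: derivative_eq_intros assms(3))
  moreover have "((\<lambda>y. ?conj (f y)) has_derivative f') (at x)"
    using assms(4)
    by (intro has_derivative_transform_within_open[OF assms(3,1,2)])
      (simp add: real_quat_iff complex_eq_iff prod_eq_iff)
  ultimately have "f' v = ?conj (f' v)"
    using has_derivative_unique by metis
  then show ?thesis by (simp add: real_quat_iff complex_eq_iff prod_eq_iff)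
qed

definition CF_linear :: "(quat \<Rightarrow> quat) \<Rightarrow> quat" where
  "CF_linear L =
     ((fst (L (1, 0)) + \<i> * fst (L (\<i>, 0)) - cnj (snd (L (0, 1))) + \<i> * cnj (snd (L (0, \<i>)))) / 4,
      (fst (L (0, 1)) + \<i> * fst (L (0, \<i>)) + cnj (snd (L (1, 0))) - \<i> * cnj (snd (L (\<i>, 0)))) / 4)"

lemma CF_eq_CF_linear:
  assumes "(f has_derivative L) (at p)"
  shows "CF f p = CF_linear L"
proof -
  have "frechet_derivative (\<lambda>q. fst (f q)) (at p) = (\<lambda>v. fst (L v))"
    "frechet_derivative (\<lambda>q. cnj (snd (f q))) (at p) = (\<lambda>v. cnj (snd (L v)))"
    by (rule frechet_derivative_at[symmetric]; auto intro!: derivative_eq_intros assms)+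
  then show ?thesis
    by (simp add: CF_def CF_linear_def dzbar1_def dz2_def dzbar2_def dz1_def field_simps)
qed

lemma CF_linear_add: "CF_linear (\<lambda>v. L v + M v) = CF_linear L + CF_linear M"
  by (simp add: CF_linear_def add_divide_distrib[symmetric] algebra_simps)

lemma CF_linear_eq_0_iff:
  assumes "\<And>v. real_quat (L v)"
  shows "CF_linear L = 0 \<longleftrightarrow>
    complex_of_quat (L (0, 1)) = \<i> * complex_of_quat (L (1, 0)) \<and>
    complex_of_quat (L (0, \<i>)) = - \<i> * complex_of_quat (L (\<i>, 0))"
  using assms[of "(1, 0)"] assms[of "(\<i>, 0)"] assms[of "(0, 1)"] assms[of "(0, \<i>)"]
  by (auto simp: CF_linear_def complex_of_quat_def real_quat_iff zero_prod_def complex_eq_iff)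

lemma CF_linear_qmult_eq_0:
  assumes "real_quat a" "\<And>v. real_quat (L v)" "CF_linear L = 0"
  shows "CF_linear (\<lambda>v. qmult a (L v)) = 0"
proof -
  have "\<And>v. real_quat (qmult a (L v))" by (simp add: real_quat_qmult assms(1,2))
  then show ?thesis
    using assms by (simp add: CF_linear_eq_0_iff complex_of_quat_qmult)
qed

lemma CF_add_eq_0:
  assumes "(f has_derivative f') (at p)" "(g has_derivative g') (at p)" "CF f p = 0" "CF g p = 0"
  shows "CF (\<lambda>q. f q + g q) p = 0"
proof -
  have "CF (\<lambda>q. f q + g q) p = CF_linear f' + CF_linear g'"
    by (simp add: CF_eq_CF_linear[OF has_derivative_add[OF assms(1,2)]] CF_linear_add)
  then show ?thesis using assms by (simp add: CF_eq_CF_linear)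
qed

lemma CF_qmult_eq_0:
  assumes "open S" "p \<in> S" "(f has_derivative f') (at p)" "(g has_derivative g') (at p)"
    and "\<And>q. q \<in> S \<Longrightarrow> real_quat (f q)" "\<And>q. q \<in> S \<Longrightarrow> real_quat (g q)"
    and "CF f p = 0" "CF g p = 0"
  shows "CF (\<lambda>q. qmult (f q) (g q)) p = 0"
proof -
  have f': "real_quat (f' v)" and g': "real_quat (g' v)" for v
    using has_derivative_real_quat[OF assms(1,2,3,5)] has_derivative_real_quat[OF assms(1,2,4,6)]
    by blast+
  have "CF (\<lambda>q. qmult (f q) (g q)) p = CF_linear (\<lambda>v. qmult (f p) (g' v) + qmult (f' v) (g p))"
    by (intro CF_eq_CF_linear bounded_bilinear.FDERIV[OF bounded_bilinear_qmult] assms(3,4))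
  also have "\<dots> = CF_linear (\<lambda>v. qmult (f p) (g' v)) + CF_linear (\<lambda>v. qmult (g p) (f' v))"
    using assms(2,5,6) f' by (simp add: CF_linear_add qmult_commute_real)
  also have "\<dots> = 0"
    using CF_linear_qmult_eq_0[of "f p" g'] CF_linear_qmult_eq_0[of "g p" f'] assms(2,5-8) f' g'
    by (simp add: CF_eq_CF_linear[OF assms(3)] CF_eq_CF_linear[OF assms(4)])
  finally show ?thesis .
qed

lemma H_R_iff: "(V, f) \<in> H_R U \<longleftrightarrow> ae_hyperholomorphic U V f \<and> (\<forall>p\<in>V. real_quat (f p))"
  by (simp add: H_R_def real_quat_def)

lemma H_R_const:
  assumes "open U" "real_quat c"
  shows "(U, \<lambda>_. c) \<in> H_R U"
proof -
  have "CF (\<lambda>_. c) p = CF_linear (\<lambda>_. 0)" for p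
    by (rule CF_eq_CF_linear) simp
  then show ?thesis
    using assms by (simp add: H_R_iff ae_hyperholomorphic_def smooth_on_const CF_linear_def)
qed

lemma H_R_Int:
  assumes "(V, f) \<in> H_R U" "(W, g) \<in> H_R U" "smooth_on (V \<inter> W) h"
    and "\<And>p. p \<in> V \<inter> W \<Longrightarrow> CF h p = 0" "\<And>p. p \<in> V \<inter> W \<Longrightarrow> real_quat (h p)"
  shows "(V \<inter> W, h) \<in> H_R U"
proof -
  from assms(1,2) have "open V" "open W" "V \<subseteq> U" "negligible (U - V)" "negligible (U - W)"
    by (simp_all add: H_R_iff ae_hyperholomorphic_def)
  moreover have "U - V \<inter> W = (U - V) \<union> (U - W)" by blast
  ultimately show ?thesis
    using assms(3-5) by (simp add: H_R_iff ae_hyperholomorphic_def zero_prod_def open_Int le_infI1)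
qed

lemma H_R_add:
  assumes f: "(V, f) \<in> H_R U" and g: "(W, g) \<in> H_R U"
  shows "(V \<inter> W, \<lambda>p. f p + g p) \<in> H_R U"
proof (rule H_R_Int[OF f g])
  from f g have "open V" "open W" "smooth_on V f" "smooth_on W g"
    and "\<forall>p\<in>V. CF f p = 0" "\<forall>p\<in>W. CF g p = 0"
    and "\<forall>p\<in>V. real_quat (f p)" "\<forall>p\<in>W. real_quat (g p)"
    by (simp_all add: H_R_iff ae_hyperholomorphic_def zero_prod_def)
  then show "smooth_on (V \<inter> W) (\<lambda>p. f p + g p)"
    "\<And>p. p \<in> V \<inter> W \<Longrightarrow> CF (\<lambda>p. f p + g p) p = 0"
    "\<And>p. p \<in> V \<inter> W \<Longrightarrow> real_quat (f p + g p)"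
    by (auto intro: smooth_on_add smooth_on_subset CF_add_eq_0 smooth_on_has_derivative real_quat_add)
qed

lemma H_R_qmult:
  assumes f: "(V, f) \<in> H_R U" and g: "(W, g) \<in> H_R U"
  shows "(V \<inter> W, \<lambda>p. qmult (f p) (g p)) \<in> H_R U"
proof (rule H_R_Int[OF f g])
  from f g have "open V" "open W" and sf: "smooth_on V f" and sg: "smooth_on W g"
    and cf: "\<forall>p\<in>V. CF f p = 0" and cg: "\<forall>p\<in>W. CF g p = 0"
    and rf: "\<forall>p\<in>V. real_quat (f p)" and rg: "\<forall>p\<in>W. real_quat (g p)"
    by (simp_all add: H_R_iff ae_hyperholomorphic_def zero_prod_def)
  then have "open (V \<inter> W)" by blast
  show "smooth_on (V \<inter> W) (\<lambda>p. qmult (f p) (g p))"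
    using smooth_on_subset[OF sf \<open>open (V \<inter> W)\<close>] smooth_on_subset[OF sg \<open>open (V \<inter> W)\<close>]
    by (simp add: smooth_on_bilinear[OF bounded_bilinear_qmult])
  fix p assume p: "p \<in> V \<inter> W"
  show "CF (\<lambda>p. qmult (f p) (g p)) p = 0"
    using p rf rg cf cg
    by (intro CF_qmult_eq_0[OF \<open>open (V \<inter> W)\<close> p smooth_on_has_derivative[OF sf]
          smooth_on_has_derivative[OF sg]]) auto
  show "real_quat (qmult (f p) (g p))"
    using p rf rg by (simp add: real_quat_qmult)
qed

theorem corollary2p3:
  fixes U :: "(complex \<times> complex) set"
  assumes "open U"
  shows "(U, (\<lambda>_. (0, 0))) \<in> H_R U
    \<and> (\<forall>(V, f) \<in> H_R U. \<forall>(W, g) \<in> H_R U.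
          (V \<inter> W, (\<lambda>p. f p + g p)) \<in> H_R U \<and>
          (V \<inter> W, (\<lambda>p. qmult (f p) (g p))) \<in> H_R U)
    \<and> (\<forall>(V, f) \<in> H_R U. \<forall>c::real. (V, (\<lambda>p. qmult (f p) (complex_of_real c, 0))) \<in> H_R U)"
proof (intro conjI)
  show "(U, \<lambda>_. (0, 0)) \<in> H_R U"
    using H_R_const[OF assms, of "(0, 0)"] by (simp add: real_quat_def)
  show "\<forall>(V, f) \<in> H_R U. \<forall>(W, g) \<in> H_R U.
      (V \<inter> W, \<lambda>p. f p + g p) \<in> H_R U \<and> (V \<inter> W, \<lambda>p. qmult (f p) (g p)) \<in> H_R U"
    by (clarify, intro conjI H_R_add H_R_qmult)
  show "\<forall>(V, f) \<in> H_R U. \<forall>c::real. (V, \<lambda>p. qmult (f p) (complex_of_real c, 0)) \<in> H_R U"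
  proof clarify
    fix V f and c :: real
    assume f: "(V, f) \<in> H_R U"
    have "(U, \<lambda>_. (complex_of_real c, 0)) \<in> H_R U"
      using assms by (simp add: H_R_const real_quat_def)
    from H_R_qmult[OF f this] show "(V, \<lambda>p. qmult (f p) (complex_of_real c, 0)) \<in> H_R U"
      using f by (simp add: H_R_iff ae_hyperholomorphic_def Int_absorb2)
  qed
qed

end
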